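(* Let $F_3:\mathbb{R}^{d_s}\to\mathbb{R}^{2d_f\times 2d_f}$ and $G_{2,i}:\mathbb{R}^{d_s}\to\mathbb{R}^{2d_f\times 2d_f}$, $i=1,\dots,d_s$, be continuously differentiable, and assume that $F_3(q^s)^T G_{2,i}(q^s)$ is a symmetric matrix for every $q^s\in\mathbb{R}^{d_s}$ and every $i$. Define $\Phi:\mathbb{R}^{d_f}\times\mathbb{R}^{d_f}\times\mathbb{R}^{d_s}\times\mathbb{R}^{d_s}\to$ itself by $\Phi(q^f,p^f,q^s,p^s)=(\tilde q^f,\tilde p^f,\tilde q^s,\tilde p^s)$, where, writing $x=\begin{bmatrix} q^f\\ p^f\end{bmatrix}$, $$\begin{bmatrix}\tilde q^f\\ \tilde p^f\end{bmatrix}=F_3(q^s)\,x,\qquad \tilde q^s=q^s,\qquad \tilde p^s_i=p^s_i-\tfrac12\, x^T F_3(q^s)^T G_{2,i}(q^s)\,x\quad(i=1,\dots,d_s).$$ Then $\Phi$ is symplectic (i.e. $D\Phi(z)^T\mathbb{J}\,D\Phi(z)=\mathbb{J}$ for all $z$) if and only if, for every $q^s$, $F_3(q^s)^T J F_3(q^s)=J$ and $G_{2,i}(q^s)=-J\,\dfrac{\partial F_3}{\partial q^s_i}(q^s)$ for all $i=1,\dots,d_s$.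
   Context: Coordinates are ordered as $(q^f,p^f,q^s,p^s)$ with $q^f,p^f\in\mathbb{R}^{d_f}$, $q^s,p^s\in\mathbb{R}^{d_s}$. $J=\begin{bmatrix}0&I\\-I&0\end{bmatrix}$ denotes the standard symplectic matrix (of size $2d_f$ on the fast variables and of size $2d_s$ on the slow variables, with $I$ the identity of the appropriate size), and $\mathbb{J}=\begin{bmatrix}J&0\\0&J\end{bmatrix}$ is the canonical symplectic matrix on the full phase space. A map is symplectic if its Jacobian $D\Phi$ satisfies $D\Phi^T\mathbb{J}D\Phi=\mathbb{J}$; a matrix $F$ is symplectic if $F^TJF=J$. *)

theory Defs
  imports "HOL-Analysis.Analysis"
begin

text \<open>Standard symplectic matrix J = [[0, I], [-I, 0]] on R^n x R^n,
  index type 'n + 'n: Inl = position block, Inr = momentum block.\<close>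
definition symp_J :: "real ^ ('n::finite + 'n) ^ ('n + 'n)" where
  "symp_J = (\<chi> a b. case (a, b) of
       (Inl i, Inr j) \<Rightarrow> (if i = j then 1 else 0)
     | (Inr i, Inl j) \<Rightarrow> (if i = j then -1 else 0)
     | _ \<Rightarrow> 0)"

text \<open>Canonical symplectic matrix on the full phase space, blockdiag(J_f, J_s),
  coordinates ordered (q^f, p^f, q^s, p^s).\<close>
definition symp_JJ :: "real ^ (('f::finite + 'f) + ('s::finite + 's)) ^ (('f + 'f) + ('s + 's))" where
  "symp_JJ = (\<chi> a b. case (a, b) of
       (Inl i, Inl j) \<Rightarrow> (symp_J :: real ^ ('f + 'f) ^ ('f + 'f)) $ i $ j
     | (Inr i, Inr j) \<Rightarrow> (symp_J :: real ^ ('s + 's) ^ ('s + 's)) $ i $ j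
     | _ \<Rightarrow> 0)"

definition C1_on_UNIV :: "('a::euclidean_space \<Rightarrow> 'b::real_normed_vector) \<Rightarrow> bool" where
  "C1_on_UNIV f \<longleftrightarrow> (\<exists>f'. (\<forall>x. (f has_derivative blinfun_apply (f' x)) (at x))
                              \<and> continuous_on UNIV f')"

definition Phi_map ::
  "(real ^ 's \<Rightarrow> real ^ ('f + 'f) ^ ('f + 'f)) \<Rightarrow>
   ('s \<Rightarrow> real ^ 's \<Rightarrow> real ^ ('f + 'f) ^ ('f + 'f)) \<Rightarrow>
   real ^ (('f::finite + 'f) + ('s::finite + 's)) \<Rightarrow> real ^ (('f + 'f) + ('s + 's))" where
  "Phi_map F3 G2 z =
     (let x = (\<chi> k. z $ Inl k) :: real ^ ('f + 'f);
          qs = (\<chi> j. z $ Inr (Inl j)) :: real ^ 's;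
          ps = (\<chi> j. z $ Inr (Inr j)) :: real ^ 's
      in \<chi> k. case k of
           Inl a \<Rightarrow> (F3 qs *v x) $ a
         | Inr (Inl j) \<Rightarrow> qs $ j
         | Inr (Inr j) \<Rightarrow> ps $ j - 1/2 * (x \<bullet> ((transpose (F3 qs) ** G2 j qs) *v x)))"

end

theory Submission
  imports Defs
begin

text \<open>
  Phi keeps the slow position q, acts on the fast variables x = (q^f, p^f) by the matrix F3(q),
  and shifts the slow momenta by a quadratic form in x.  Its Jacobian at a point with fast
  part x and slow position q is therefore a "shear"
     (x', q', p') |-> (A x' + sum_l q'_l v_l, q', p' - (<A x', b_j> + sum_l M_jl q'_l)_j)
  with A = F3(q), v_l = (dF3/dq_l) x, b_j = G_j x and M built from the derivatives.
  The proof has three layers: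
  (1) linear algebra: such a shear preserves the canonical form iff A is symplectic,
      omega(A x', v_l) = -<A x', b_l> and omega(v_i, v_l) = M_il - M_li, where
      omega(a, b) = a . J b  (shear_symplectic_iff);
  (2) calculus: the Frechet derivative of Phi is such a shear (Phi_symplectic_at_iff), so
      symplecticity of Phi is the pointwise family of conditions Phi_conditions;
  (3) these conditions for all x are equivalent to F3^T J F3 = J and G_i = -J dF3/dq_i.
      The first two conditions give this directly; conversely the third condition needs
      the symmetry of second derivatives of F3 (Schwarz's theorem, proved here for C^1
      partials), which is where the continuity of the derivatives of the G_i enters.
\<close>

section \<open>The standard symplectic matrix\<close>

lemma sum_UNIV_plus:
  "(\<Sum>k\<in>(UNIV::('a::finite + 'b::finite) set). g k) = (\<Sum>i\<in>UNIV. g (Inl i)) + (\<Sum>j\<in>UNIV. g (Inr j))"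
  using sum.Plus[of "UNIV::'a set" "UNIV::'b set" g] by (simp add: comp_def)

lemma inner_plus:
  "(u::real^('a::finite + 'b::finite)) \<bullet> v
     = (\<Sum>i\<in>UNIV. u $ Inl i * v $ Inl i) + (\<Sum>j\<in>UNIV. u $ Inr j * v $ Inr j)"
  unfolding inner_vec_def by (simp add: sum_UNIV_plus)

lemma symp_J_nth [simp]:
  "(symp_J::real^('n::finite+'n)^('n+'n)) $ Inl i $ Inl j = 0"
  "(symp_J::real^('n::finite+'n)^('n+'n)) $ Inr i $ Inr j = 0"
  "(symp_J::real^('n::finite+'n)^('n+'n)) $ Inl i $ Inr j = (if i = j then 1 else 0)"
  "(symp_J::real^('n::finite+'n)^('n+'n)) $ Inr i $ Inl j = (if i = j then -1 else 0)"
  unfolding symp_J_def by simp_all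

lemma symp_J_mult_vec [simp]:
  "((symp_J::real^('n::finite+'n)^('n+'n)) *v b) $ Inl i = b $ Inr i"
  "((symp_J::real^('n::finite+'n)^('n+'n)) *v b) $ Inr i = - b $ Inl i"
  unfolding matrix_vector_mult_def by (simp_all add: sum_UNIV_plus if_distrib[of "\<lambda>t. t * _"] sum_negf cong: if_cong)

lemma symp_J_mult_mat [simp]:
  "((symp_J::real^('n::finite+'n)^('n+'n)) ** A) $ Inl i $ c = A $ Inr i $ c"
  "((symp_J::real^('n::finite+'n)^('n+'n)) ** A) $ Inr i $ c = - A $ Inl i $ c"
  unfolding matrix_matrix_mult_def by (simp_all add: sum_UNIV_plus if_distrib[of "\<lambda>t. t * _"] sum_negf cong: if_cong)

lemma symp_J_squared: "(symp_J::real^('n::finite+'n)^('n+'n)) ** (symp_J ** X) = - X"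
proof -
  have "(symp_J ** (symp_J ** X)) $ i = (- X) $ i" for i
    by (cases i) (simp_all add: vec_eq_iff)
  then show ?thesis by (simp add: vec_eq_iff)
qed

lemma symp_J_mult_self: "(symp_J::real^('n::finite+'n)^('n+'n)) ** symp_J = - mat 1"
  using symp_J_squared[of "mat 1"] by simp

lemma matrix_mult_uminus_right: "(A::real^'n::finite^'m::finite) ** (- B) = - (A ** B)"
  by (simp add: matrix_matrix_mult_def vec_eq_iff sum_negf)

lemma matrix_mult_uminus_vec: "(- (A::real^'n::finite^'m::finite)) *v x = - (A *v x)"
  by (simp add: matrix_vector_mult_def vec_eq_iff sum_negf)

abbreviation omega_J :: "real^('n::finite+'n) \<Rightarrow> real^('n+'n) \<Rightarrow> real" where
  "omega_J a b \<equiv> a \<bullet> (symp_J *v b)"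

lemma omega_J_expand: "omega_J a b = (\<Sum>i\<in>UNIV. a $ Inl i * b $ Inr i - a $ Inr i * b $ Inl i)"
  by (simp add: inner_plus sum_subtractf sum_negf)

lemma omega_J_antisym: "omega_J a b = - omega_J b a"
  by (simp add: omega_J_expand sum_negf[symmetric] algebra_simps)

lemma inner_mv_transpose: "((A::real^'n::finite^'m::finite) *v x) \<bullet> y = x \<bullet> (transpose A *v y)"
  by (metis dot_lmul_matrix vector_transpose_matrix)

lemma matrix_eq_by_inner:
  assumes "\<And>u v. u \<bullet> ((X::real^'n::finite^'m::finite) *v v) = u \<bullet> (Y *v v)"
  shows "X = Y"
proof (rule matrix_eq[THEN iffD2], rule allI)
  fix v
  have "(X *v v - Y *v v) \<bullet> (X *v v - Y *v v) = 0"
    using assms by (simp add: inner_diff_right inner_diff_left)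
  then show "X *v v = Y *v v" by simp
qed

lemma congruence_iff_form:
  fixes M K :: "real^'n::finite^'n"
  shows "transpose M ** K ** M = K \<longleftrightarrow> (\<forall>u v. (M *v u) \<bullet> (K *v (M *v v)) = u \<bullet> (K *v v))"
proof -
  have "(M *v u) \<bullet> (K *v (M *v v)) = u \<bullet> ((transpose M ** K ** M) *v v)" for u v
    by (simp add: inner_mv_transpose matrix_vector_mul_assoc matrix_mul_assoc)
  then show ?thesis
    using matrix_eq_by_inner by metis
qed

text \<open>A symplectic matrix F is invertible, so F^T can be cancelled on the left.\<close>
lemma symplectic_left_cancel:
  fixes F :: "real^('n::finite+'n)^('n+'n)"
  assumes "transpose F ** symp_J ** F = symp_J" and "transpose F ** X = transpose F ** Y"
  shows "X = Y"
proof -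
  have "transpose F ** (symp_J ** F ** (- symp_J)) = mat 1"
    using assms(1) by (simp add: matrix_mul_assoc matrix_mult_uminus_right symp_J_mult_self)
  then obtain L where L: "L ** transpose F = mat 1"
    using matrix_left_right_inverse by blast
  have "L ** (transpose F ** X) = L ** (transpose F ** Y)"
    using assms(2) by simp
  then show ?thesis
    by (simp add: matrix_mul_assoc L)
qed

section \<open>Phase space and the canonical form\<close>

definition fast :: "real^(('f::finite+'f)+('s::finite+'s)) \<Rightarrow> real^('f+'f)" where
  "fast z = (\<chi> k. z $ Inl k)"
definition slow_q :: "real^(('f::finite+'f)+('s::finite+'s)) \<Rightarrow> real^'s" where
  "slow_q z = (\<chi> k. z $ Inr (Inl k))"
definition slow_p :: "real^(('f::finite+'f)+('s::finite+'s)) \<Rightarrow> real^'s" where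
  "slow_p z = (\<chi> k. z $ Inr (Inr k))"
definition phase :: "real^('f::finite+'f) \<Rightarrow> real^'s::finite \<Rightarrow> real^'s \<Rightarrow> real^(('f+'f)+('s+'s))" where
  "phase x q p = (\<chi> k. case k of Inl i \<Rightarrow> x $ i | Inr (Inl j) \<Rightarrow> q $ j | Inr (Inr j) \<Rightarrow> p $ j)"

lemma phase_coords [simp]:
  "fast (phase x q p) = x" "slow_q (phase x q p) = q" "slow_p (phase x q p) = p"
  by (simp_all add: fast_def slow_q_def slow_p_def phase_def vec_eq_iff)

lemma symp_JJ_nth [simp]:
  "(symp_JJ::real^(('f::finite+'f)+('s::finite+'s))^(('f+'f)+('s+'s))) $ Inl i $ Inl j = (symp_J::real^('f+'f)^('f+'f)) $ i $ j"
  "(symp_JJ::real^(('f::finite+'f)+('s::finite+'s))^(('f+'f)+('s+'s))) $ Inr i' $ Inr j' = (symp_J::real^('s+'s)^('s+'s)) $ i' $ j'"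
  "(symp_JJ::real^(('f::finite+'f)+('s::finite+'s))^(('f+'f)+('s+'s))) $ Inl i $ Inr j' = 0"
  "(symp_JJ::real^(('f::finite+'f)+('s::finite+'s))^(('f+'f)+('s+'s))) $ Inr i' $ Inl j = 0"
  unfolding symp_JJ_def by simp_all

lemma symp_JJ_form:
  "(u::real^(('f::finite+'f)+('s::finite+'s))) \<bullet> (symp_JJ *v v)
     = omega_J (fast u) (fast v) + (\<Sum>j\<in>UNIV. slow_q u $ j * slow_p v $ j - slow_p u $ j * slow_q v $ j)"
proof -
  have "(symp_JJ *v v) $ Inl k = (symp_J *v fast v) $ k" for k
    unfolding matrix_vector_mult_def fast_def by (simp add: sum_UNIV_plus)
  moreover have "(symp_JJ *v v) $ Inr (Inl j) = slow_p v $ j" for j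
    unfolding matrix_vector_mult_def slow_p_def
    by (simp add: sum_UNIV_plus if_distrib[of "\<lambda>t. t * _"] cong: if_cong)
  moreover have "(symp_JJ *v v) $ Inr (Inr j) = - slow_q v $ j" for j
    unfolding matrix_vector_mult_def slow_q_def
    by (simp add: sum_UNIV_plus sum_negf if_distrib[of "\<lambda>t. t * _"] cong: if_cong)
  ultimately show ?thesis
    by (simp add: inner_plus sum_UNIV_plus inner_vec_def fast_def slow_q_def slow_p_def
        sum_negf sum_subtractf)
qed

section \<open>Shears and when they are symplectic\<close>

text \<open>The linear maps of the shape of the Jacobian of Phi:
  (x, q, p) |-> (A x + sum_l q_l v_l, q, p - (<A x, b_j> + sum_l M_jl q_l)_j).\<close>
definition shear ::
  "real^('f+'f)^('f+'f) \<Rightarrow> ('s \<Rightarrow> real^('f+'f)) \<Rightarrow> ('s \<Rightarrow> real^('f+'f)) \<Rightarrow> ('s \<Rightarrow> 's \<Rightarrow> real)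
     \<Rightarrow> real^(('f::finite+'f)+('s::finite+'s)) \<Rightarrow> real^(('f+'f)+('s+'s))" where
  "shear A v b M u =
     phase (A *v fast u + (\<Sum>l\<in>UNIV. slow_q u $ l *\<^sub>R v l)) (slow_q u)
           (slow_p u - (\<chi> j. (A *v fast u) \<bullet> b j + (\<Sum>l\<in>UNIV. M j l * slow_q u $ l)))"

lemma matrix_vector_mult_sum_scaleR:
  "(A::real^'n::finite^'m::finite) *v (\<Sum>i\<in>S. c i *\<^sub>R y i) = (\<Sum>i\<in>S. c i *\<^sub>R (A *v y i))"
  by (simp add: real_vector.linear_sum[OF matrix_vector_mul_linear]
      real_vector.linear_scale[OF matrix_vector_mul_linear])

lemma omega_J_shear_fast:
  "omega_J (A *v x + (\<Sum>i\<in>UNIV. q $ i *\<^sub>R v i)) (A *v y + (\<Sum>l\<in>UNIV. r $ l *\<^sub>R v l))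
     = omega_J (A *v x) (A *v y) + (\<Sum>l\<in>UNIV. r $ l * omega_J (A *v x) (v l))
       - (\<Sum>i\<in>UNIV. q $ i * omega_J (A *v y) (v i))
       + (\<Sum>i\<in>UNIV. q $ i * (\<Sum>l\<in>UNIV. r $ l * omega_J (v i) (v l)))"
proof -
  have "omega_J (\<Sum>i\<in>UNIV. q $ i *\<^sub>R v i) (A *v y) = - (\<Sum>i\<in>UNIV. q $ i * omega_J (A *v y) (v i))"
    by (simp add: inner_sum_left sum_negf[symmetric] omega_J_antisym[of "v _"])
  then show ?thesis
    by (simp add: matrix_vector_right_distrib inner_add_left inner_add_right inner_sum_left
        inner_sum_right matrix_vector_mult_sum_scaleR sum_distrib_left mult.assoc distrib_left
        sum.distrib mult.left_commute[of "r $ _"])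
      (rule sum.swap)
qed

lemma shear_form:
  fixes A :: "real^('f::finite+'f)^('f+'f)" and u w :: "real^(('f+'f)+('s::finite+'s))"
  defines "q \<equiv> slow_q u" and "r \<equiv> slow_q w"
  shows "shear A v b M u \<bullet> (symp_JJ *v shear A v b M w) = u \<bullet> (symp_JJ *v w)
    + (omega_J (A *v fast u) (A *v fast w) - omega_J (fast u) (fast w))
    + (\<Sum>l\<in>UNIV. r $ l * (omega_J (A *v fast u) (v l) + (A *v fast u) \<bullet> b l))
    - (\<Sum>i\<in>UNIV. q $ i * (omega_J (A *v fast w) (v i) + (A *v fast w) \<bullet> b i))
    + (\<Sum>i\<in>UNIV. q $ i * (\<Sum>l\<in>UNIV. r $ l * (omega_J (v i) (v l) - M i l + M l i)))"
proof -
  have swap: "(\<Sum>j\<in>UNIV. r $ j * (\<Sum>l\<in>UNIV. M j l * q $ l))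
      = (\<Sum>i\<in>UNIV. q $ i * (\<Sum>l\<in>UNIV. r $ l * M l i))"
    by (simp add: sum_distrib_left algebra_simps) (rule sum.swap)
  have "(\<Sum>j\<in>UNIV. q $ j * (slow_p w $ j - ((A *v fast w) \<bullet> b j + (\<Sum>l\<in>UNIV. M j l * r $ l)))
        - (slow_p u $ j - ((A *v fast u) \<bullet> b j + (\<Sum>l\<in>UNIV. M j l * q $ l))) * r $ j)
      = (\<Sum>j\<in>UNIV. q $ j * slow_p w $ j - slow_p u $ j * r $ j)
        + (\<Sum>l\<in>UNIV. r $ l * ((A *v fast u) \<bullet> b l)) - (\<Sum>i\<in>UNIV. q $ i * ((A *v fast w) \<bullet> b i))
        - (\<Sum>i\<in>UNIV. q $ i * (\<Sum>l\<in>UNIV. r $ l * M i l))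
        + (\<Sum>j\<in>UNIV. r $ j * (\<Sum>l\<in>UNIV. M j l * q $ l))"
    by (simp add: sum_subtractf sum.distrib sum_distrib_left algebra_simps)
  then show ?thesis
    unfolding symp_JJ_form shear_def phase_coords omega_J_shear_fast swap q_def[symmetric] r_def[symmetric]
    by (simp add: sum_subtractf sum.distrib algebra_simps)
qed

lemma sum_axis_mult [simp]: "(\<Sum>l\<in>UNIV. axis i (1::real) $ l * f l) = f i"
  by (simp add: axis_def if_distrib[of "\<lambda>t. t * _"] cong: if_cong)

text \<open>Characterisation of symplectic shears; each condition is tested on a pair of fast or slow
  coordinate vectors.\<close>
lemma shear_symplectic_iff:
  fixes A :: "real^('f::finite+'f)^('f+'f)" and v b :: "'s::finite \<Rightarrow> real^('f+'f)"
  shows "(\<forall>u w :: real^(('f+'f)+('s+'s)).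
            shear A v b M u \<bullet> (symp_JJ *v shear A v b M w) = u \<bullet> (symp_JJ *v w))
     \<longleftrightarrow> (\<forall>x y. omega_J (A *v x) (A *v y) = omega_J x y)
       \<and> (\<forall>x l. omega_J (A *v x) (v l) = - ((A *v x) \<bullet> b l))
       \<and> (\<forall>i l. omega_J (v i) (v l) = M i l - M l i)"
    (is "?preserves \<longleftrightarrow> ?A \<and> ?B \<and> ?C")
proof
  assume pres: ?preserves
  have "omega_J (A *v x) (A *v y) = omega_J x y" for x y
    using pres[rule_format, of "phase x 0 0" "phase y 0 0"] by (simp add: shear_form)
  moreover have "omega_J (A *v x) (v l) = - ((A *v x) \<bullet> b l)" for x l
    using pres[rule_format, of "phase x 0 0" "phase 0 (axis l 1) 0"] by (simp add: shear_form)
  moreover have "omega_J (v i) (v l) = M i l - M l i" for i l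
    using pres[rule_format, of "phase 0 (axis i 1) 0" "phase 0 (axis l 1) 0"]
    by (simp add: shear_form)
  ultimately show "?A \<and> ?B \<and> ?C" by blast
next
  assume "?A \<and> ?B \<and> ?C"
  then show ?preserves by (simp add: shear_form)
qed

section \<open>The derivative of Phi\<close>

lemma bounded_bilinear_matrix_vector_mult: "bounded_bilinear (\<lambda>(A::real^'n::finite^'m::finite) x. A *v x)"
  unfolding bilinear_conv_bounded_bilinear[symmetric] bilinear_def
  by (auto simp: linear_iff matrix_vector_right_distrib matrix_vector_mult_add_rdistrib
      matrix_vector_mult_scaleR scalar_mult_eq_scaleR scaleR_matrix_vector_assoc)

lemma linear_coords:
  "linear (fast :: real^(('f::finite+'f)+('s::finite+'s)) \<Rightarrow> _)"
  "linear (slow_q :: real^(('f::finite+'f)+('s::finite+'s)) \<Rightarrow> _)"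
  "linear (slow_p :: real^(('f::finite+'f)+('s::finite+'s)) \<Rightarrow> _)"
  by (auto simp: linear_iff fast_def slow_q_def slow_p_def vec_eq_iff)

lemma has_derivative_coords:
  "(fast has_derivative fast) F" "(slow_q has_derivative slow_q) F" "(slow_p has_derivative slow_p) F"
  using linear_coords by (auto intro: bounded_linear_imp_has_derivative simp: linear_conv_bounded_linear)

lemma has_derivative_vecI:
  assumes "\<And>i. ((\<lambda>x. f x $ i) has_derivative (\<lambda>h. f' h $ i)) (at a within S)"
  shows "((f::'a::real_normed_vector \<Rightarrow> real^'n::finite) has_derivative f') (at a within S)"
proof (subst has_derivative_componentwise_within, intro ballI)
  fix b :: "real^'n" assume "b \<in> Basis"
  then obtain i where "b = axis i 1" by (auto simp: Basis_vec_def)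
  then show "((\<lambda>x. f x \<bullet> b) has_derivative (\<lambda>x. f' x \<bullet> b)) (at a within S)"
    using assms[of i] by (simp add: cart_eq_inner_axis[symmetric])
qed

lemma has_derivative_nth:
  "(f has_derivative f') F \<Longrightarrow> ((\<lambda>x. f x $ i) has_derivative (\<lambda>h. f' h $ i)) F"
  by (rule bounded_linear.has_derivative[OF bounded_linear_vec_nth])

lemma has_derivative_phase:
  assumes "(x has_derivative x') (at z within S)" "(q has_derivative q') (at z within S)"
    and "(p has_derivative p') (at z within S)"
  shows "((\<lambda>z. phase (x z) (q z) (p z)) has_derivative (\<lambda>h. phase (x' h) (q' h) (p' h))) (at z within S)"
proof (rule has_derivative_vecI)
  fix k
  show "((\<lambda>z. phase (x z) (q z) (p z) $ k) has_derivative (\<lambda>h. phase (x' h) (q' h) (p' h) $ k)) (at z within S)"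
    using assms[THEN has_derivative_nth]
    by (cases k; cases "projr k") (simp_all add: phase_def)
qed

lemma Phi_map_coords:
  "Phi_map F3 G2 z = phase (F3 (slow_q z) *v fast z) (slow_q z)
     (slow_p z - (\<chi> j. 1/2 * ((F3 (slow_q z) *v fast z) \<bullet> (G2 j (slow_q z) *v fast z))))"
  unfolding Phi_map_def Let_def
  by (simp add: phase_def fast_def[symmetric] slow_q_def[symmetric] slow_p_def[symmetric]
      inner_mv_transpose matrix_vector_mul_assoc vec_eq_iff split: sum.splits)

lemma Phi_has_derivative:
  fixes F3 :: "real^'s::finite \<Rightarrow> real^('f::finite+'f)^('f+'f)"
    and z :: "real^(('f+'f)+('s+'s))"
  assumes dF: "\<And>q. (F3 has_derivative F' q) (at q)"
    and dG: "\<And>j q. (G2 j has_derivative G' j q) (at q)"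
  defines "q \<equiv> slow_q z" and "x \<equiv> fast z"
  shows "(Phi_map F3 G2 has_derivative (\<lambda>u.
    phase (F3 q *v fast u + F' q (slow_q u) *v x) (slow_q u)
      (slow_p u - (\<chi> j. 1/2 * ((F3 q *v x) \<bullet> (G2 j q *v fast u + G' j q (slow_q u) *v x)
                               + (F3 q *v fast u + F' q (slow_q u) *v x) \<bullet> (G2 j q *v x)))))) (at z)"
proof -
  note bb = bounded_bilinear.FDERIV[OF bounded_bilinear_matrix_vector_mult]
  have dFx: "((\<lambda>z. F3 (slow_q z) *v fast z) has_derivative
      (\<lambda>u. F3 q *v fast u + F' q (slow_q u) *v x)) (at z)"
    using bb[OF has_derivative_compose[OF has_derivative_coords(2) dF] has_derivative_coords(1)]
    by (simp add: q_def x_def)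
  have dGx: "((\<lambda>z. G2 j (slow_q z) *v fast z) has_derivative
      (\<lambda>u. G2 j q *v fast u + G' j q (slow_q u) *v x)) (at z)" for j
    using bb[OF has_derivative_compose[OF has_derivative_coords(2) dG] has_derivative_coords(1)]
    by (simp add: q_def x_def)
  have "((\<lambda>z. slow_p z - (\<chi> j. 1/2 * ((F3 (slow_q z) *v fast z) \<bullet> (G2 j (slow_q z) *v fast z))))
      has_derivative (\<lambda>u. slow_p u - (\<chi> j. 1/2 * ((F3 q *v x) \<bullet> (G2 j q *v fast u + G' j q (slow_q u) *v x)
                               + (F3 q *v fast u + F' q (slow_q u) *v x) \<bullet> (G2 j q *v x))))) (at z)"
    using bounded_linear.has_derivative[OF bounded_linear_mult_right[of "1/2::real"]
        has_derivative_inner[OF dFx dGx]]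
    by (intro has_derivative_diff has_derivative_coords has_derivative_vecI) (simp add: q_def x_def)
  then show ?thesis
    unfolding Phi_map_coords[abs_def]
    by (intro has_derivative_phase dFx has_derivative_coords) (simp add: q_def x_def)
qed

lemma linear_apply_expand:
  assumes "linear (P :: real^'s::finite \<Rightarrow> real^'n::finite^'m::finite)"
  shows "P k *v x = (\<Sum>j\<in>UNIV. k $ j *\<^sub>R (P (axis j 1) *v x))"
proof -
  have apply_x: "linear (\<lambda>A::real^'n^'m. A *v x)"
    using bounded_bilinear.bounded_linear_left[OF bounded_bilinear_matrix_vector_mult]
    by (simp add: linear_conv_bounded_linear)
  have basis: "(\<Sum>j\<in>UNIV. k $ j *\<^sub>R axis j 1) = k"
    by (simp add: vec_eq_iff axis_def if_distrib[of "\<lambda>t. _ * t"] cong: if_cong)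
  have "P k = (\<Sum>j\<in>UNIV. k $ j *\<^sub>R P (axis j 1))"
    by (subst basis[symmetric])
      (simp add: real_vector.linear_sum[OF assms] real_vector.linear_scale[OF assms])
  then show ?thesis
    by (simp add: real_vector.linear_sum[OF apply_x] real_vector.linear_scale[OF apply_x])
qed

text \<open>The coefficient M_jl of the slow-momentum shift in the Jacobian of Phi: the l-th partial
  of the quadratic form x^T F3^T G_j x, halved.\<close>
definition slow_coupling ::
  "(real^'s \<Rightarrow> real^('f+'f)^('f+'f)) \<Rightarrow> (real^'s \<Rightarrow> real^'s \<Rightarrow> real^('f+'f)^('f+'f))
     \<Rightarrow> ('s \<Rightarrow> real^'s \<Rightarrow> real^('f+'f)^('f+'f)) \<Rightarrow> ('s \<Rightarrow> real^'s \<Rightarrow> real^'s \<Rightarrow> real^('f+'f)^('f+'f))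
     \<Rightarrow> real^'s::finite \<Rightarrow> real^('f::finite+'f) \<Rightarrow> 's \<Rightarrow> 's \<Rightarrow> real" where
  "slow_coupling F3 F' G2 G' q x j l =
     1/2 * ((F3 q *v x) \<bullet> (G' j q (axis l 1) *v x) + (F' q (axis l 1) *v x) \<bullet> (G2 j q *v x))"

lemma Phi_derivative_is_shear:
  fixes F3 :: "real^'s::finite \<Rightarrow> real^('f::finite+'f)^('f+'f)"
    and u :: "real^(('f+'f)+('s+'s))"
  assumes linF: "linear (F' q)" and linG: "\<And>j. linear (G' j q)"
    and symm: "\<And>j a c. (F3 q *v a) \<bullet> (G2 j q *v c) = (F3 q *v c) \<bullet> (G2 j q *v a)"
  shows "phase (F3 q *v fast u + F' q (slow_q u) *v x) (slow_q u)
      (slow_p u - (\<chi> j. 1/2 * ((F3 q *v x) \<bullet> (G2 j q *v fast u + G' j q (slow_q u) *v x)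
                               + (F3 q *v fast u + F' q (slow_q u) *v x) \<bullet> (G2 j q *v x))))
   = shear (F3 q) (\<lambda>l. F' q (axis l 1) *v x) (\<lambda>j. G2 j q *v x) (slow_coupling F3 F' G2 G' q x) u"
proof -
  have slow_p_eq: "1/2 * ((F3 q *v x) \<bullet> (G2 j q *v fast u + G' j q (slow_q u) *v x)
            + (F3 q *v fast u + F' q (slow_q u) *v x) \<bullet> (G2 j q *v x))
      = (F3 q *v fast u) \<bullet> (G2 j q *v x)
        + (\<Sum>l\<in>UNIV. 1/2 * ((F3 q *v x) \<bullet> (G' j q (axis l 1) *v x)
                           + (F' q (axis l 1) *v x) \<bullet> (G2 j q *v x)) * slow_q u $ l)" for j
    unfolding linear_apply_expand[OF linF, where k="slow_q u"] linear_apply_expand[OF linG, where k="slow_q u"]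
    by (simp add: symm[where a=x] inner_add_left inner_add_right
        inner_sum_left inner_sum_right sum.distrib sum_distrib_left algebra_simps)
  show ?thesis
    by (simp only: slow_p_eq shear_def slow_coupling_def)
      (simp only: linear_apply_expand[OF linF, where k="slow_q u"])
qed

section \<open>Symmetry of second derivatives\<close>

lemma mvt_line:
  fixes g :: "'a::real_normed_vector \<Rightarrow> real"
  assumes dg: "\<And>q. (g has_derivative g' q) (at q)" and h: "h > 0"
  shows "\<exists>t. 0 < t \<and> t < h \<and> g (p + h *\<^sub>R d) - g p = h * g' (p + t *\<^sub>R d) d"
proof -
  have line: "((\<lambda>s. p + s *\<^sub>R d) has_derivative (\<lambda>y. y *\<^sub>R d)) (at s)" for s :: real
    by (auto intro!: derivative_eq_intros)
  have dgl: "((\<lambda>s. g (p + s *\<^sub>R d)) has_derivative (\<lambda>y. g' (p + s *\<^sub>R d) (y *\<^sub>R d))) (at s)" for s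
    by (rule has_derivative_compose[OF line dg])
  have "continuous_on {0..h} (\<lambda>s. g (p + s *\<^sub>R d))"
    by (intro continuous_at_imp_continuous_on ballI has_derivative_continuous[OF dgl])
  then obtain t where "0 < t" "t < h"
      "g (p + h *\<^sub>R d) - g (p + 0 *\<^sub>R d) = g' (p + t *\<^sub>R d) ((h - 0) *\<^sub>R d)"
    using mvt[OF h _ dgl] by blast
  moreover have "linear (g' (p + t *\<^sub>R d))"
    using dg has_derivative_linear by blast
  ultimately show ?thesis
    using real_vector.linear_scale[of "g' (p + t *\<^sub>R d)" h d] by auto
qed

lemma second_difference_mvt:
  fixes f :: "'a::real_normed_vector \<Rightarrow> real"
  assumes df: "\<And>q. (f has_derivative f' q) (at q)"
    and du: "\<And>q. ((\<lambda>q. f' q u) has_derivative Du q) (at q)"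
    and h: "h > 0"
  shows "\<exists>s t. 0 < s \<and> s < h \<and> 0 < t \<and> t < h \<and>
    f (q0 + h *\<^sub>R u + h *\<^sub>R w) - f (q0 + h *\<^sub>R u) - f (q0 + h *\<^sub>R w) + f q0
      = h * h * Du (q0 + s *\<^sub>R u + t *\<^sub>R w) w"
proof -
  have "((\<lambda>p. f (p + h *\<^sub>R w) - f p) has_derivative (\<lambda>y. f' (p + h *\<^sub>R w) y - f' p y)) (at p)" for p
    by (intro has_derivative_diff has_derivative_compose[OF _ df] derivative_eq_intros) auto
  from mvt_line[OF this h, of q0 u] obtain s where s: "0 < s" "s < h"
    "f (q0 + h *\<^sub>R u + h *\<^sub>R w) - f (q0 + h *\<^sub>R u) - f (q0 + h *\<^sub>R w) + f q0
      = h * (f' (q0 + s *\<^sub>R u + h *\<^sub>R w) u - f' (q0 + s *\<^sub>R u) u)"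
    by (auto simp: algebra_simps)
  from mvt_line[OF du h, of "q0 + s *\<^sub>R u" w] obtain t where "0 < t" "t < h"
    "f' (q0 + s *\<^sub>R u + h *\<^sub>R w) u - f' (q0 + s *\<^sub>R u) u = h * Du (q0 + s *\<^sub>R u + t *\<^sub>R w) w"
    by auto
  with s show ?thesis
    by (intro exI[of _ s] exI[of _ t]) simp
qed

lemma schwarz_scalar:
  fixes f :: "'a::real_normed_vector \<Rightarrow> real"
  assumes df: "\<And>q. (f has_derivative f' q) (at q)"
    and du: "\<And>q. ((\<lambda>q. f' q u) has_derivative Du q) (at q)"
    and dw: "\<And>q. ((\<lambda>q. f' q w) has_derivative Dw q) (at q)"
    and cu: "isCont (\<lambda>q. Du q w) q0" and cw: "isCont (\<lambda>q. Dw q u) q0"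
  shows "Du q0 w = Dw q0 u"
proof (rule ccontr)
  assume "Du q0 w \<noteq> Dw q0 u"
  define e where "e = \<bar>Du q0 w - Dw q0 u\<bar> / 2"
  have "e > 0" using \<open>Du q0 w \<noteq> Dw q0 u\<close> by (simp add: e_def)
  obtain d1 where "d1 > 0" and d1: "\<And>x. dist x q0 < d1 \<Longrightarrow> \<bar>Du x w - Du q0 w\<bar> < e"
    using cu \<open>e > 0\<close> unfolding continuous_at_eps_delta dist_real_def by blast
  obtain d2 where "d2 > 0" and d2: "\<And>x. dist x q0 < d2 \<Longrightarrow> \<bar>Dw x u - Dw q0 u\<bar> < e"
    using cw \<open>e > 0\<close> unfolding continuous_at_eps_delta dist_real_def by blast
  define d where "d = min d1 d2"
  have "d > 0" and d: "\<And>x. dist x q0 < d \<Longrightarrow> \<bar>Du x w - Du q0 w\<bar> < e \<and> \<bar>Dw x u - Dw q0 u\<bar> < e"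
    using \<open>d1 > 0\<close> \<open>d2 > 0\<close> d1 d2 by (auto simp: d_def)
  have norms_pos: "norm u + norm w + 1 > 0"
    by (intro add_nonneg_pos) auto
  define h where "h = d / (norm u + norm w + 1)"
  have "h > 0" using \<open>d > 0\<close> norms_pos by (simp add: h_def)
  have near: "dist (q0 + s *\<^sub>R u + t *\<^sub>R w) q0 < d" if "0 < s" "s < h" "0 < t" "t < h" for s t
  proof -
    have "dist (q0 + s *\<^sub>R u + t *\<^sub>R w) q0 \<le> s * norm u + t * norm w"
      using norm_triangle_ineq[of "s *\<^sub>R u" "t *\<^sub>R w"] that by (simp add: dist_norm)
    also have "\<dots> \<le> h * (norm u + norm w)"
      using that by (simp add: distrib_left add_mono mult_right_mono)
    also have "\<dots> < h * (norm u + norm w + 1)"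
      using \<open>h > 0\<close> by simp
    also have "\<dots> = d"
      using norms_pos by (simp add: h_def)
    finally show ?thesis .
  qed
  obtain s1 t1 where st1: "0 < s1" "s1 < h" "0 < t1" "t1 < h"
    "f (q0 + h *\<^sub>R u + h *\<^sub>R w) - f (q0 + h *\<^sub>R u) - f (q0 + h *\<^sub>R w) + f q0
      = h * h * Du (q0 + s1 *\<^sub>R u + t1 *\<^sub>R w) w"
    using second_difference_mvt[OF df du \<open>h > 0\<close>] by blast
  obtain t2 s2 where st2: "0 < t2" "t2 < h" "0 < s2" "s2 < h"
    "f (q0 + h *\<^sub>R w + h *\<^sub>R u) - f (q0 + h *\<^sub>R w) - f (q0 + h *\<^sub>R u) + f q0
      = h * h * Dw (q0 + t2 *\<^sub>R w + s2 *\<^sub>R u) u"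
    using second_difference_mvt[OF df dw \<open>h > 0\<close>] by blast
  have "Du (q0 + s1 *\<^sub>R u + t1 *\<^sub>R w) w = Dw (q0 + s2 *\<^sub>R u + t2 *\<^sub>R w) u"
    using st1(5) st2(5) \<open>h > 0\<close> by (simp add: algebra_simps)
  moreover have "\<bar>x - a\<bar> < \<bar>a - b\<bar> / 2 \<Longrightarrow> \<bar>x - b\<bar> < \<bar>a - b\<bar> / 2 \<Longrightarrow> False" for x a b :: real
    by (auto simp: abs_if split: if_splits)
  ultimately show False
    using d[OF near[OF st1(1-4)]] d[OF near[OF st2(3,4,1,2)]] unfolding e_def by metis
qed

lemma schwarz:
  fixes f :: "'a::real_normed_vector \<Rightarrow> 'b::euclidean_space"
  assumes df: "\<And>q. (f has_derivative f' q) (at q)"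
    and du: "\<And>q. ((\<lambda>q. f' q u) has_derivative Du q) (at q)"
    and dw: "\<And>q. ((\<lambda>q. f' q w) has_derivative Dw q) (at q)"
    and cu: "isCont (\<lambda>q. Du q w) q0" and cw: "isCont (\<lambda>q. Dw q u) q0"
  shows "Du q0 w = Dw q0 u"
proof (rule euclidean_eqI)
  fix b :: 'b
  note inner_b = bounded_linear.has_derivative[OF bounded_linear_inner_left[of b]]
  show "Du q0 w \<bullet> b = Dw q0 u \<bullet> b"
    by (rule schwarz_scalar[where f="\<lambda>q. f q \<bullet> b" and f'="\<lambda>q k. f' q k \<bullet> b"])
      (use df du dw cu cw in \<open>auto intro: inner_b continuous_intros\<close>)
qed

lemma bounded_linear_matrix_mult_left: "bounded_linear (\<lambda>X::real^'k::finite^'n::finite. (C::real^'n^'m::finite) ** X)"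
proof -
  have "linear (\<lambda>X::real^'k^'n. C ** X)"
    by (rule linearI) (simp_all add: matrix_add_ldistrib matrix_scalar_ac scalar_matrix_assoc)
  then show ?thesis
    by (simp add: linear_conv_bounded_linear)
qed

text \<open>If every partial derivative of F3 has the form J G_i, then, by Schwarz's theorem, the
  derivatives of the G_i are symmetric: the i-th partial of G_l equals the l-th partial of G_i.\<close>
lemma mixed_partials_symmetric:
  fixes F3 :: "real^'s::finite \<Rightarrow> real^('f::finite+'f)^('f+'f)"
  assumes dF: "\<And>q. (F3 has_derivative F' q) (at q)"
    and dG: "\<And>i q. (G2 i has_derivative G' i q) (at q)"
    and cG: "\<And>i k q. isCont (\<lambda>q. G' i q k) q"
    and FG: "\<And>i q. F' q (axis i 1) = symp_J ** G2 i q"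
  shows "G' i q (axis l 1) = G' l q (axis i 1)"
proof -
  have cont: "isCont (\<lambda>q. symp_J ** G' j q k) q" for j k
    using bounded_linear.isCont[OF bounded_linear_matrix_mult_left cG] .
  have "symp_J ** G' i q (axis l 1) = symp_J ** G' l q (axis i 1)"
    by (rule schwarz[OF dF, where u="axis i 1" and w="axis l 1"])
      (simp_all only: FG bounded_linear.has_derivative[OF bounded_linear_matrix_mult_left dG] cont)
  then have "symp_J ** (symp_J ** G' i q (axis l 1)) = symp_J ** (symp_J ** G' l q (axis i 1))"
    by simp
  then show ?thesis
    by (simp add: symp_J_squared)
qed

section \<open>Symplecticity of Phi\<close>

text \<open>The conditions of shear_symplectic_iff for the Jacobian of Phi at a point with slow
  position q and fast part x.\<close>
definition Phi_conditions ::
  "(real^'s \<Rightarrow> real^('f+'f)^('f+'f)) \<Rightarrow> (real^'s \<Rightarrow> real^'s \<Rightarrow> real^('f+'f)^('f+'f))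
     \<Rightarrow> ('s \<Rightarrow> real^'s \<Rightarrow> real^('f+'f)^('f+'f)) \<Rightarrow> ('s \<Rightarrow> real^'s \<Rightarrow> real^'s \<Rightarrow> real^('f+'f)^('f+'f))
     \<Rightarrow> real^'s::finite \<Rightarrow> real^('f::finite+'f) \<Rightarrow> bool" where
  "Phi_conditions F3 F' G2 G' q x \<longleftrightarrow>
     (\<forall>a c. omega_J (F3 q *v a) (F3 q *v c) = omega_J a c)
     \<and> (\<forall>a l. omega_J (F3 q *v a) (F' q (axis l 1) *v x) = - ((F3 q *v a) \<bullet> (G2 l q *v x)))
     \<and> (\<forall>i l. omega_J (F' q (axis i 1) *v x) (F' q (axis l 1) *v x)
               = slow_coupling F3 F' G2 G' q x i l - slow_coupling F3 F' G2 G' q x l i)"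

lemma Phi_symplectic_at_iff:
  fixes F3 :: "real^'s::finite \<Rightarrow> real^('f::finite+'f)^('f+'f)"
    and z :: "real^(('f+'f)+('s+'s))"
  assumes dF: "\<And>q. (F3 has_derivative F' q) (at q)"
    and dG: "\<And>j q. (G2 j has_derivative G' j q) (at q)"
    and symm: "\<And>q j a c. (F3 q *v a) \<bullet> (G2 j q *v c) = (F3 q *v c) \<bullet> (G2 j q *v a)"
  shows "transpose (matrix (frechet_derivative (Phi_map F3 G2) (at z)))
           ** symp_JJ ** matrix (frechet_derivative (Phi_map F3 G2) (at z)) = symp_JJ
     \<longleftrightarrow> Phi_conditions F3 F' G2 G' (slow_q z) (fast z)"
proof -
  have linF: "linear (F' q)" and linG: "linear (G' j q)" for q j
    using dF dG has_derivative_linear by blast+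
  let ?D = "shear (F3 (slow_q z)) (\<lambda>l. F' (slow_q z) (axis l 1) *v fast z) (\<lambda>j. G2 j (slow_q z) *v fast z)
              (slow_coupling F3 F' G2 G' (slow_q z) (fast z))"
  have D: "(Phi_map F3 G2 has_derivative ?D) (at z)"
    using Phi_has_derivative[where ?G2.0=G2 and G'=G' and z=z, OF dF dG]
    unfolding Phi_derivative_is_shear[where ?F3.0=F3 and F'=F' and ?G2.0=G2 and G'=G' and q="slow_q z",
        OF linF linG symm] .
  then have matrix_D: "matrix (frechet_derivative (Phi_map F3 G2) (at z)) *v u = ?D u" for u
    using frechet_derivative_at[OF D] matrix_vector_mul(2)[OF has_derivative_linear[OF D]] by metis
  show ?thesis
    unfolding congruence_iff_form matrix_D shear_symplectic_iff Phi_conditions_def ..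
qed

text \<open>If the conditions hold for every x, then F3(q) is symplectic (first condition) and
  G_i = -J dF3/dq_i: the second condition says F3^T (J dF3/dq_i + G_i) = 0.\<close>
lemma Phi_conditions_imp_generating_relations:
  fixes F3 :: "real^'s::finite \<Rightarrow> real^('f::finite+'f)^('f+'f)"
  assumes conds: "\<And>x. Phi_conditions F3 F' G2 G' q x"
  shows "transpose (F3 q) ** symp_J ** F3 q = symp_J \<and> (\<forall>i. G2 i q = - (symp_J ** F' q (axis i 1)))"
proof -
  have FJ: "transpose (F3 q) ** symp_J ** F3 q = symp_J"
    using conds unfolding congruence_iff_form Phi_conditions_def by blast
  have "G2 i q = - (symp_J ** F' q (axis i 1))" for i
  proof -
    have pulled_back: "a \<bullet> ((transpose (F3 q) ** X) *v x) = (F3 q *v a) \<bullet> (X *v x)" for a x X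
      by (simp only: inner_mv_transpose matrix_vector_mul_assoc)
    have "transpose (F3 q) ** (symp_J ** F' q (axis i 1)) = transpose (F3 q) ** (- G2 i q)"
    proof (rule matrix_eq_by_inner)
      fix a x
      have "omega_J (F3 q *v a) (F' q (axis i 1) *v x) = - ((F3 q *v a) \<bullet> (G2 i q *v x))"
        using conds unfolding Phi_conditions_def by blast
      then show "a \<bullet> ((transpose (F3 q) ** (symp_J ** F' q (axis i 1))) *v x)
          = a \<bullet> ((transpose (F3 q) ** (- G2 i q)) *v x)"
        unfolding pulled_back by (simp add: matrix_vector_mul_assoc[symmetric] matrix_mult_uminus_vec)
    qed
    then have "symp_J ** F' q (axis i 1) = - G2 i q"
      by (rule symplectic_left_cancel[OF FJ])
    then show ?thesis by simp
  qed
  with FJ show ?thesis by blast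
qed

text \<open>Conversely, the two relations imply the conditions; the third one follows from the
  symmetry of the derivatives of the G_i.\<close>
lemma generating_relations_imp_Phi_conditions:
  fixes F3 :: "real^'s::finite \<Rightarrow> real^('f::finite+'f)^('f+'f)"
  assumes FJ: "transpose (F3 q) ** symp_J ** F3 q = symp_J"
    and GJ: "\<And>i. G2 i q = - (symp_J ** F' q (axis i 1))"
    and mixed: "\<And>i l. G' i q (axis l 1) = G' l q (axis i 1)"
  shows "Phi_conditions F3 F' G2 G' q x"
proof -
  let ?v = "\<lambda>l. F' q (axis l 1) *v x"
  have Gx: "G2 l q *v x = - (symp_J *v ?v l)" for l
    by (simp add: GJ matrix_mult_uminus_vec matrix_vector_mul_assoc)
  have "omega_J (F3 q *v a) (?v l) = - ((F3 q *v a) \<bullet> (G2 l q *v x))" for a l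
    by (simp add: Gx)
  moreover have "omega_J (?v i) (?v l)
      = slow_coupling F3 F' G2 G' q x i l - slow_coupling F3 F' G2 G' q x l i" for i l
    using omega_J_antisym[of "?v i" "?v l"] by (simp add: slow_coupling_def Gx mixed algebra_simps)
  ultimately show ?thesis
    using FJ unfolding Phi_conditions_def congruence_iff_form by blast
qed

lemma Phi_conditions_iff_generating_relations:
  fixes F3 :: "real^'s::finite \<Rightarrow> real^('f::finite+'f)^('f+'f)"
  assumes dF: "\<And>q. (F3 has_derivative F' q) (at q)"
    and dG: "\<And>i q. (G2 i has_derivative G' i q) (at q)"
    and cG: "\<And>i k q. isCont (\<lambda>q. G' i q k) q"
  shows "(\<forall>q x. Phi_conditions F3 F' G2 G' q x) \<longleftrightarrow>
    (\<forall>q. transpose (F3 q) ** symp_J ** F3 q = symp_J \<and> (\<forall>i. G2 i q = - (symp_J ** F' q (axis i 1))))"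
proof (intro iffI allI)
  fix q assume "\<forall>q x. Phi_conditions F3 F' G2 G' q x"
  then show "transpose (F3 q) ** symp_J ** F3 q = symp_J \<and> (\<forall>i. G2 i q = - (symp_J ** F' q (axis i 1)))"
    by (intro Phi_conditions_imp_generating_relations) blast
next
  fix q x assume rel: "\<forall>q. transpose (F3 q) ** symp_J ** F3 q = symp_J
                         \<and> (\<forall>i. G2 i q = - (symp_J ** F' q (axis i 1)))"
  then have "F' q (axis i 1) = symp_J ** G2 i q" for i q
    by (simp add: matrix_mult_uminus_right symp_J_squared)
  with rel show "Phi_conditions F3 F' G2 G' q x"
    by (intro generating_relations_imp_Phi_conditions mixed_partials_symmetric[OF dF dG cG]) auto
qed

lemma C1_on_UNIV_derivative:
  assumes "C1_on_UNIV f"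
  shows "\<exists>f'. (\<forall>x. (f has_derivative f' x) (at x)) \<and> (\<forall>x k. isCont (\<lambda>x. f' x k) x)"
proof -
  obtain f'' where "\<And>x. (f has_derivative blinfun_apply (f'' x)) (at x)" and "continuous_on UNIV f''"
    using assms unfolding C1_on_UNIV_def by blast
  moreover from this(2) have "isCont (\<lambda>x. blinfun_apply (f'' x) k) x" for x k
    by (intro continuous_intros) (simp add: continuous_on_eq_continuous_at)
  ultimately show ?thesis
    by (intro exI[of _ "\<lambda>x. blinfun_apply (f'' x)"]) blast
qed

lemma symmetric_product_inner:
  assumes "transpose (transpose A ** B) = transpose (A::real^'n::finite^'m::finite) ** B"
  shows "(A *v a) \<bullet> (B *v c) = (A *v c) \<bullet> (B *v a)"
proof -
  have "(A *v a) \<bullet> (B *v c) = a \<bullet> ((transpose A ** B) *v c)"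
    by (simp add: inner_mv_transpose matrix_vector_mul_assoc)
  also have "\<dots> = ((transpose A ** B) *v a) \<bullet> c"
    by (subst assms[symmetric]) (simp add: inner_mv_transpose)
  also have "\<dots> = (A *v c) \<bullet> (B *v a)"
    by (simp add: inner_mv_transpose matrix_vector_mul_assoc[symmetric] inner_commute)
  finally show ?thesis .
qed

theorem lemma3p1:
  fixes F3 :: "real ^ 's::finite \<Rightarrow> real ^ ('f::finite + 'f) ^ ('f + 'f)"
    and G2 :: "'s \<Rightarrow> real ^ 's \<Rightarrow> real ^ ('f + 'f) ^ ('f + 'f)"
  assumes F3_C1: "C1_on_UNIV F3"
    and G2_C1: "\<And>i. C1_on_UNIV (G2 i)"
    and sym: "\<And>qs i. transpose (transpose (F3 qs) ** G2 i qs) = transpose (F3 qs) ** G2 i qs"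
  shows "(\<forall>z. transpose (matrix (frechet_derivative (Phi_map F3 G2) (at z)))
                  ** symp_JJ ** matrix (frechet_derivative (Phi_map F3 G2) (at z)) = symp_JJ)
     \<longleftrightarrow> (\<forall>qs. transpose (F3 qs) ** symp_J ** F3 qs = symp_J
              \<and> (\<forall>i. G2 i qs = - (symp_J ** frechet_derivative F3 (at qs) (axis i 1))))"
proof -
  obtain F' where dF: "\<And>q. (F3 has_derivative F' q) (at q)"
    using C1_on_UNIV_derivative[OF F3_C1] by blast
  obtain G' where dG: "\<And>i q. (G2 i has_derivative G' i q) (at q)"
      and cG: "\<And>i k q. isCont (\<lambda>q. G' i q k) q"
    using C1_on_UNIV_derivative[OF G2_C1] by metis
  have symm: "(F3 q *v a) \<bullet> (G2 j q *v c) = (F3 q *v c) \<bullet> (G2 j q *v a)" for q j a c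
    using symmetric_product_inner[OF sym] .
  have "(\<forall>z. transpose (matrix (frechet_derivative (Phi_map F3 G2) (at z)))
                  ** symp_JJ ** matrix (frechet_derivative (Phi_map F3 G2) (at z)) = symp_JJ)
      \<longleftrightarrow> (\<forall>q x. Phi_conditions F3 F' G2 G' q x)"
    unfolding Phi_symplectic_at_iff[OF dF dG symm] by (metis phase_coords(1,2))
  also have "\<dots> \<longleftrightarrow> (\<forall>q. transpose (F3 q) ** symp_J ** F3 q = symp_J
                         \<and> (\<forall>i. G2 i q = - (symp_J ** F' q (axis i 1))))"
    by (rule Phi_conditions_iff_generating_relations[OF dF dG cG])
  finally show ?thesis
    using frechet_derivative_at[OF dF] by simp
qed

end
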